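(* Let $P$ be a program and $M$ a memory model, and assume every execution graph $G$ with $\mathrm{cons}_M^P(G)$ satisfies $\mathit{BE}(G)$. Then there exists $b\in\mathbb N$ such that for every execution graph $G$ with $\mathrm{cons}_M^P(G)$, $\bigl|\{(T,t)\mid T\in\mathcal T,\ t<N_G^T,\ e_G^T(t)\text{ is a write event}\}\bigr|\le b.$
   Context: Programs. There are finite sets $\mathit{Register}$, $\mathit{Value}$, $\mathit{Location}$; $\mathit{State}=\mathit{Register}\to\mathit{Value}$; an update is a partial map $\mathit{Register}\rightharpoonup\mathit{Value}$, and $(\sigma\ll\mu)(r)=\mu(r)$ if $r\in\mathrm{Dom}(\mu)$, else $\sigma(r)$. Events are reads $R^m(x)$, writes $W^m(x,v)$, fences $F^m$, error $E$. A program $P$ consists of a finite set $\mathcal T$ of threads, each $T$ with a finite statement sequence $P_T(0),\dots,P_T(|P_T|-1)$. A statement is $\mathtt{step}(\epsilon,\delta)$ with $\epsilon:\mathit{State}\to\mathit{Event}$, $\delta:\mathit{State}\times(\mathit{Value}\cup\{\bot\})\to\mathit{Update}$, or $\mathtt{await}(n,\kappa)$ with $n\in\mathbb N$, $\kappa:\mathit{State}\to\{0,1\}$. Syntactic restriction: if $P_T(k)=\mathtt{await}(n,\cdot)$ then $n\le k$ and no $P_T(k')$ with $k'\in[k-n:k)$ is an await. ($[a:b)=\{a,\dots,b-1\}$.) An execution graph $G$ has a set $G.\mathrm E$ of triples $\langle T,t,e\rangle$, a partial reads-from map $G.\mathrm{rf}$ from reads to writes, and a modification order $G.\mathrm{mo}$.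 Thread-local semantics: $k_G^T(0)=0$, $\sigma_G^T(0)$ fixed; if $k_G^T(t)\ge|P_T|$ or no triple $\langle T,t,\cdot\rangle$ is in $G.\mathrm E$, execution stops ($N_G^T=t$). Otherwise with $S=P_T(k_G^T(t))$: $e_G^T(t)=\epsilon(\sigma_G^T(t))$ for $S=\mathtt{step}(\epsilon,\cdot)$, $F^{\mathrm{rlx}}$ for an await; $v_G^T(t)$ is the value of the write that $G.\mathrm{rf}$ assigns to $\langle T,t,e_G^T(t)\rangle$ if this is a read with defined rf, else $\bot$. For a step: $k_G^T(t+1)=k_G^T(t)+1$; if $e_G^T(t)$ is a read with $v_G^T(t)=\bot$ then $N_G^T=t+1$, $\sigma_G^T(t+1)=\sigma_G^T(t)$, else $\sigma_G^T(t+1)=\sigma_G^T(t)\ll\delta(\sigma_G^T(t),v_G^T(t))$. For $\mathtt{await}(n,\kappa)$: $\sigma_G^T(t+1)=\sigma_G^T(t)$ and $k_G^T(t+1)=k_G^T(t)+1$ if $\kappa(\sigma_G^T(t))=0$, else $k_G^T(t)-n$. $\mathrm{cons}^P(G)$ holds iff $G.\mathrm E=\{\langle T,t,e_G^T(t)\rangle\mid T\in\mathcal T,\ t<N_G^T\}$; $\mathrm{cons}_M$ is an arbitrary fixed predicate on graphs and $\mathrm{cons}_M^P(G)=\mathrm{cons}^P(G)\wedge\mathrm{cons}_M(G)$. Awaits: $\mathit{end}_G^T(0)<\mathit{end}_G^T(1)<\cdots$ enumerate the steps $t$ at which $P_T(k_G^T(t))$ is an await; $\mathit{len}_G^T(q)=n$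 where $P_T(k_G^T(\mathit{end}_G^T(q)))=\mathtt{await}(n,\kappa)$; $\mathit{start}_G^T(q)=\mathit{end}_G^T(q)-\mathit{len}_G^T(q)$; $\mathit{fail}_G^T(q)$ iff $\kappa(\sigma_G^T(\mathit{end}_G^T(q)))=1$. Bounded effect. $\delta_G^T(t)=\delta(\sigma_G^T(t),v_G^T(t))$ if $P_T(k_G^T(t))=\mathtt{step}(\cdot,\delta)$ and not ($e_G^T(t)$ is a read and $v_G^T(t)=\bot$); otherwise the empty update. $\mathit{vis}_G^T(t,u)=\mathrm{Dom}(\delta_G^T(t))\setminus\bigcup_{t<u'<u}\mathrm{Dom}(\delta_G^T(u'))$. $F(\mathtt{step}(\epsilon,\delta))=\{\epsilon,\delta\}$, $F(\mathtt{await}(n,\kappa))=\{\kappa\}$. A function $f$ depends on $R\subseteq\mathit{Register}$ iff there are states $\sigma,\sigma'$ agreeing outside $R$ with $f(\sigma)\neq f(\sigma')$ (for $f=\delta$: $\delta(\sigma,v)\neq\delta(\sigma',v)$ for some $v$). Step $t$ of $T$ register-reads-from to step $u$ ($t\to_{\mathrm{rrf}}u$) iff $u\ge t$ and some $f\in F(P_T(k_G^T(u)))$ depends on $\mathit{vis}_G^T(t,u)$. $\mathit{BE}(G)$ holds iff for all $T$, all $q$ with $\mathit{fail}_G^T(q)$ and all $t\in[\mathit{start}_G^T(q):\mathit{end}_G^T(q))$: $e_G^T(t)$ is not a write, and $t\to_{\mathrm{rrf}}u$ implies $u\in[\mathit{start}_G^T(q):\mathit{end}_G^T(q))$. *)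

theory Defs
  imports Main "HOL-Library.Extended_Nat"
begin

datatype mode = NA | Rlx | Acq | Rel | AcqRel | SC

datatype ('loc, 'val) event =
    Read mode 'loc
  | Write mode 'loc 'val
  | Fence mode
  | Err

fun is_read :: "('loc, 'val) event \<Rightarrow> bool" where
  "is_read (Read _ _) = True"
| "is_read _ = False"

fun is_write :: "('loc, 'val) event \<Rightarrow> bool" where
  "is_write (Write _ _ _) = True"
| "is_write _ = False"

fun write_val :: "('loc, 'val) event \<Rightarrow> 'val option" where
  "write_val (Write _ _ v) = Some v"
| "write_val _ = None"

type_synonym ('reg, 'val) state = "'reg \<Rightarrow> 'val"
type_synonym ('reg, 'val) update = "'reg \<rightharpoonup> 'val"

definition apply_upd :: "('reg, 'val) state \<Rightarrow> ('reg, 'val) update \<Rightarrow> ('reg, 'val) state" where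
  "apply_upd \<sigma> \<mu> = (\<lambda>r. case \<mu> r of Some v \<Rightarrow> v | None \<Rightarrow> \<sigma> r)"

text \<open>Value \<union> {bottom} is rendered as 'val option (None = bottom); kappa returns True for 1.\<close>
datatype ('reg, 'val, 'loc) stmt =
    Step "('reg, 'val) state \<Rightarrow> ('loc, 'val) event"
         "('reg, 'val) state \<Rightarrow> 'val option \<Rightarrow> ('reg, 'val) update"
  | Await nat "('reg, 'val) state \<Rightarrow> bool"

record ('thr, 'reg, 'val, 'loc) program =
  threads :: "'thr set"
  code :: "'thr \<Rightarrow> ('reg, 'val, 'loc) stmt list"
  init :: "'thr \<Rightarrow> ('reg, 'val) state"

definition wf_program :: "('thr, 'reg, 'val, 'loc) program \<Rightarrow> bool" where
  "wf_program P \<longleftrightarrow> finite (threads P) \<and>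
     (\<forall>T \<in> threads P. \<forall>k < length (code P T). \<forall>n \<kappa>.
        code P T ! k = Await n \<kappa> \<longrightarrow>
          n \<le> k \<and> (\<forall>k' \<in> {k - n..<k}. \<forall>n' \<kappa>'. code P T ! k' \<noteq> Await n' \<kappa>'))"

type_synonym ('thr, 'loc, 'val) triple = "'thr \<times> nat \<times> ('loc, 'val) event"

record ('thr, 'loc, 'val) egraph =
  gE :: "('thr, 'loc, 'val) triple set"
  gRf :: "('thr, 'loc, 'val) triple \<rightharpoonup> ('thr, 'loc, 'val) triple"
  gMo :: "(('thr, 'loc, 'val) triple \<times> ('thr, 'loc, 'val) triple) set"

definition rf_val :: "('thr, 'loc, 'val) egraph \<Rightarrow> 'thr \<Rightarrow> nat \<Rightarrow> ('loc, 'val) event \<Rightarrow> 'val option" where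
  "rf_val G T t e = (if is_read e then (case gRf G (T, t, e) of Some w \<Rightarrow> write_val (snd (snd w)) | None \<Rightarrow> None) else None)"

fun cfg :: "('thr, 'reg, 'val, 'loc) program \<Rightarrow> ('thr, 'loc, 'val) egraph \<Rightarrow> 'thr \<Rightarrow> nat \<Rightarrow> nat \<times> ('reg, 'val) state" where
  "cfg P G T 0 = (0, init P T)"
| "cfg P G T (Suc t) =
     (let (k, \<sigma>) = cfg P G T t in
      if k < length (code P T) then
        (case code P T ! k of
           Step \<epsilon> \<delta> \<Rightarrow> (Suc k,
              if is_read (\<epsilon> \<sigma>) \<and> rf_val G T t (\<epsilon> \<sigma>) = None then \<sigma>
              else apply_upd \<sigma> (\<delta> \<sigma> (rf_val G T t (\<epsilon> \<sigma>))))
         | Await n \<kappa> \<Rightarrow> (if \<kappa> \<sigma> then k - n else Suc k, \<sigma>))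
      else (k, \<sigma>))"

definition pc :: "('thr, 'reg, 'val, 'loc) program \<Rightarrow> ('thr, 'loc, 'val) egraph \<Rightarrow> 'thr \<Rightarrow> nat \<Rightarrow> nat" where
  "pc P G T t = fst (cfg P G T t)"

definition st :: "('thr, 'reg, 'val, 'loc) program \<Rightarrow> ('thr, 'loc, 'val) egraph \<Rightarrow> 'thr \<Rightarrow> nat \<Rightarrow> ('reg, 'val) state" where
  "st P G T t = snd (cfg P G T t)"

definition ev :: "('thr, 'reg, 'val, 'loc) program \<Rightarrow> ('thr, 'loc, 'val) egraph \<Rightarrow> 'thr \<Rightarrow> nat \<Rightarrow> ('loc, 'val) event" where
  "ev P G T t = (if pc P G T t < length (code P T) then
      (case code P T ! pc P G T t of Step \<epsilon> \<delta> \<Rightarrow> \<epsilon> (st P G T t) | Await n \<kappa> \<Rightarrow> Fence Rlx)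
     else Err)"

definition vv :: "('thr, 'reg, 'val, 'loc) program \<Rightarrow> ('thr, 'loc, 'val) egraph \<Rightarrow> 'thr \<Rightarrow> nat \<Rightarrow> 'val option" where
  "vv P G T t = rf_val G T t (ev P G T t)"

text \<open>step t executes a step statement whose read received no value (then execution stops at t+1)\<close>
definition read_bot :: "('thr, 'reg, 'val, 'loc) program \<Rightarrow> ('thr, 'loc, 'val) egraph \<Rightarrow> 'thr \<Rightarrow> nat \<Rightarrow> bool" where
  "read_bot P G T t \<longleftrightarrow> pc P G T t < length (code P T) \<and>
     (\<exists>\<epsilon> \<delta>. code P T ! pc P G T t = Step \<epsilon> \<delta>) \<and> is_read (ev P G T t) \<and> vv P G T t = None"

definition stops :: "('thr, 'reg, 'val, 'loc) program \<Rightarrow> ('thr, 'loc, 'val) egraph \<Rightarrow> 'thr \<Rightarrow> nat \<Rightarrow> bool" where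
  "stops P G T t \<longleftrightarrow> length (code P T) \<le> pc P G T t \<or> (\<nexists>e. (T, t, e) \<in> gE G)
       \<or> (\<exists>t'. t = Suc t' \<and> read_bot P G T t')"

definition Nsteps :: "('thr, 'reg, 'val, 'loc) program \<Rightarrow> ('thr, 'loc, 'val) egraph \<Rightarrow> 'thr \<Rightarrow> enat" where
  "Nsteps P G T = (if \<exists>t. stops P G T t then enat (LEAST t. stops P G T t) else \<infinity>)"

definition consP :: "('thr, 'reg, 'val, 'loc) program \<Rightarrow> ('thr, 'loc, 'val) egraph \<Rightarrow> bool" where
  "consP P G \<longleftrightarrow> gE G = {(T, t, ev P G T t) | T t. T \<in> threads P \<and> enat t < Nsteps P G T}"

definition consMP :: "('thr, 'reg, 'val, 'loc) program \<Rightarrow> (('thr, 'loc, 'val) egraph \<Rightarrow> bool) \<Rightarrow> ('thr, 'loc, 'val) egraph \<Rightarrow> bool" where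
  "consMP P consM G \<longleftrightarrow> consP P G \<and> consM G"

text \<open>The await steps end_G^T(0) < end_G^T(1) < ... are exactly the steps t < N_G^T at which
  P_T(k_G^T(t)) is an await; we index them by the step t itself.\<close>
definition await_step :: "('thr, 'reg, 'val, 'loc) program \<Rightarrow> ('thr, 'loc, 'val) egraph \<Rightarrow> 'thr \<Rightarrow> nat \<Rightarrow> bool" where
  "await_step P G T t \<longleftrightarrow> enat t < Nsteps P G T \<and> pc P G T t < length (code P T) \<and>
     (\<exists>n \<kappa>. code P T ! pc P G T t = Await n \<kappa>)"

definition await_len :: "('thr, 'reg, 'val, 'loc) program \<Rightarrow> ('thr, 'loc, 'val) egraph \<Rightarrow> 'thr \<Rightarrow> nat \<Rightarrow> nat" where
  "await_len P G T t = (case code P T ! pc P G T t of Await n \<kappa> \<Rightarrow> n | Step _ _ \<Rightarrow> 0)"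

definition await_start :: "('thr, 'reg, 'val, 'loc) program \<Rightarrow> ('thr, 'loc, 'val) egraph \<Rightarrow> 'thr \<Rightarrow> nat \<Rightarrow> nat" where
  "await_start P G T t = t - await_len P G T t"

definition await_fail :: "('thr, 'reg, 'val, 'loc) program \<Rightarrow> ('thr, 'loc, 'val) egraph \<Rightarrow> 'thr \<Rightarrow> nat \<Rightarrow> bool" where
  "await_fail P G T t \<longleftrightarrow> (case code P T ! pc P G T t of Await n \<kappa> \<Rightarrow> \<kappa> (st P G T t) | Step _ _ \<Rightarrow> False)"

definition delta_at :: "('thr, 'reg, 'val, 'loc) program \<Rightarrow> ('thr, 'loc, 'val) egraph \<Rightarrow> 'thr \<Rightarrow> nat \<Rightarrow> ('reg, 'val) update" where
  "delta_at P G T t = (if pc P G T t < length (code P T) then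
      (case code P T ! pc P G T t of
         Step \<epsilon> \<delta> \<Rightarrow> (if is_read (ev P G T t) \<and> vv P G T t = None then Map.empty
                       else \<delta> (st P G T t) (vv P G T t))
       | Await n \<kappa> \<Rightarrow> Map.empty)
     else Map.empty)"

definition vis :: "('thr, 'reg, 'val, 'loc) program \<Rightarrow> ('thr, 'loc, 'val) egraph \<Rightarrow> 'thr \<Rightarrow> nat \<Rightarrow> nat \<Rightarrow> 'reg set" where
  "vis P G T t u = dom (delta_at P G T t) - (\<Union>u' \<in> {t<..<u}. dom (delta_at P G T u'))"

definition depends :: "(('reg, 'val) state \<Rightarrow> 'b) \<Rightarrow> 'reg set \<Rightarrow> bool" where
  "depends f R \<longleftrightarrow> (\<exists>\<sigma> \<sigma>'. (\<forall>r. r \<notin> R \<longrightarrow> \<sigma> r = \<sigma>' r) \<and> f \<sigma> \<noteq> f \<sigma>')"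

definition depends2 :: "(('reg, 'val) state \<Rightarrow> 'val option \<Rightarrow> 'b) \<Rightarrow> 'reg set \<Rightarrow> bool" where
  "depends2 f R \<longleftrightarrow> (\<exists>\<sigma> \<sigma>' v. (\<forall>r. r \<notin> R \<longrightarrow> \<sigma> r = \<sigma>' r) \<and> f \<sigma> v \<noteq> f \<sigma>' v)"

fun stmt_depends :: "('reg, 'val, 'loc) stmt \<Rightarrow> 'reg set \<Rightarrow> bool" where
  "stmt_depends (Step \<epsilon> \<delta>) R \<longleftrightarrow> depends \<epsilon> R \<or> depends2 \<delta> R"
| "stmt_depends (Await n \<kappa>) R \<longleftrightarrow> depends \<kappa> R"

definition rrf :: "('thr, 'reg, 'val, 'loc) program \<Rightarrow> ('thr, 'loc, 'val) egraph \<Rightarrow> 'thr \<Rightarrow> nat \<Rightarrow> nat \<Rightarrow> bool" where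
  "rrf P G T t u \<longleftrightarrow> t \<le> u \<and> enat u < Nsteps P G T \<and> pc P G T u < length (code P T) \<and>
     stmt_depends (code P T ! pc P G T u) (vis P G T t u)"

definition BE :: "('thr, 'reg, 'val, 'loc) program \<Rightarrow> ('thr, 'loc, 'val) egraph \<Rightarrow> bool" where
  "BE P G \<longleftrightarrow> (\<forall>T \<in> threads P. \<forall>q. await_step P G T q \<and> await_fail P G T q \<longrightarrow>
      (\<forall>t \<in> {await_start P G T q..<q}.
         \<not> is_write (ev P G T t) \<and>
         (\<forall>u. rrf P G T t u \<longrightarrow> u \<in> {await_start P G T q..<q})))"

definition write_steps :: "('thr, 'reg, 'val, 'loc) program \<Rightarrow> ('thr, 'loc, 'val) egraph \<Rightarrow> ('thr \<times> nat) set" where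
  "write_steps P G = {(T, t). T \<in> threads P \<and> enat t < Nsteps P G T \<and> is_write (ev P G T t)}"

end

theory Submission
  imports Defs
begin

text \<open>Since the window of an await contains no awaits, the n steps preceding an
  await(n, \<kappa>) executed its window straight-line, so a failing await jumps back exactly
  to the program counter its window started with. Bounded effect forbids writes inside failing
  windows; hence control never jumps back over a write, every later step of the thread has a
  strictly larger program counter, and the write steps of a thread occur at pairwise distinct
  program counters. Their number is thus bounded by the total code length, independently of G.\<close>

definition in_failed_await ::
    "('thr, 'reg, 'val, 'loc) program \<Rightarrow> ('thr, 'loc, 'val) egraph \<Rightarrow> 'thr \<Rightarrow> nat \<Rightarrow> bool" where
  "in_failed_await P G T t \<longleftrightarrow>
     (\<exists>q. await_step P G T q \<and> await_fail P G T q \<and> t \<in> {await_start P G T q..<q})"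

lemma pc_0 [simp]: "pc P G T 0 = 0"
  by (simp add: pc_def)

lemma pc_Suc:
  assumes "pc P G T t < length (code P T)"
  shows "pc P G T (Suc t) = (case code P T ! pc P G T t of
      Step \<epsilon> \<delta> \<Rightarrow> Suc (pc P G T t)
    | Await n \<kappa> \<Rightarrow> (if \<kappa> (st P G T t) then pc P G T t - n else Suc (pc P G T t)))"
  using assms by (cases "cfg P G T t") (auto simp: pc_def st_def Let_def split: stmt.splits)

lemma pc_less_length_if_executed:
  assumes "enat t < Nsteps P G T"
  shows "pc P G T t < length (code P T)"
proof -
  have "\<not> stops P G T t"
  proof
    assume "stops P G T t"
    then have "Nsteps P G T \<le> enat t"
      by (auto simp: Nsteps_def intro: Least_le)
    with assms show False by simp
  qed
  then show ?thesis by (auto simp: stops_def)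
qed

lemma executed_le: "enat t < Nsteps P G T \<Longrightarrow> s \<le> t \<Longrightarrow> enat s < Nsteps P G T"
  by (meson enat_ord_simps(1) le_less_trans)

lemma wf_program_Await:
  assumes "wf_program P" "T \<in> threads P" "k < length (code P T)" "code P T ! k = Await n \<kappa>"
  shows "n \<le> k" "k' \<in> {k - n..<k} \<Longrightarrow> code P T ! k' \<noteq> Await n' \<kappa>'"
  using assms unfolding wf_program_def by blast+

text \<open>A jump into the window (k - n, k] could only come from an await whose own window contains k
  or which lies in the window of k; neither exists, since windows contain no awaits.\<close>
lemma pc_Suc_into_await_window:
  assumes wf: "wf_program P" and T: "T \<in> threads P"
    and s: "pc P G T s < length (code P T)"
    and k: "k < length (code P T)" "code P T ! k = Await n \<kappa>"
    and into: "k - n < pc P G T (Suc s)" "pc P G T (Suc s) \<le> k"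
  shows "pc P G T (Suc s) = Suc (pc P G T s)"
proof (cases "code P T ! pc P G T s")
  case (Await n' \<kappa>')
  show ?thesis
  proof (rule ccontr)
    assume "pc P G T (Suc s) \<noteq> Suc (pc P G T s)"
    then have jump_back: "pc P G T (Suc s) = pc P G T s - n'"
      using pc_Suc[OF s] Await by (auto split: if_splits)
    have "n \<le> k" using wf_program_Await(1)[OF wf T k] .
    consider "k < pc P G T s" | "pc P G T s = k" | "pc P G T s < k" by linarith
    then show False
    proof cases
      case 1
      then show False
        using jump_back into wf_program_Await(2)[OF wf T s Await, of k] k by auto
    next
      case 2
      then show False using jump_back into Await k by simp
    next
      case 3
      moreover have "k - n \<le> pc P G T s"
        using jump_back into by arith
      ultimately show False
        using wf_program_Await(2)[OF wf T k, of "pc P G T s" n' \<kappa>'] Await by auto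
    qed
  qed
qed (use pc_Suc[OF s] in simp)

lemma pc_before_await:
  assumes wf: "wf_program P" and T: "T \<in> threads P"
    and q: "enat q < Nsteps P G T" and aw: "code P T ! pc P G T q = Await n \<kappa>"
    and "j \<le> n"
  shows "j \<le> q \<and> pc P G T (q - j) = pc P G T q - j"
  using \<open>j \<le> n\<close>
proof (induction j)
  case (Suc j)
  define k where "k = pc P G T q"
  have k: "k < length (code P T)" "code P T ! k = Await n \<kappa>"
    using pc_less_length_if_executed[OF q] aw by (simp_all add: k_def)
  have "n \<le> k" using wf_program_Await(1)[OF wf T k] .
  with Suc have IH: "j \<le> q" "pc P G T (q - j) = k - j" "k - n < k - j"
    by (auto simp: k_def)
  then obtain s where s: "q - j = Suc s"
    by (cases "q - j") auto
  have "s \<le> q" using s by arith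
  then have "pc P G T s < length (code P T)"
    by (rule pc_less_length_if_executed[OF executed_le[OF q]])
  with IH s have "pc P G T (Suc s) = Suc (pc P G T s)"
    using pc_Suc_into_await_window[OF wf T _ k] by simp
  moreover have "Suc j \<le> q" "q - Suc j = s" using s by arith+
  ultimately show ?case using IH s by (simp add: k_def)
qed simp

lemma pc_increases_after_forward_step:
  assumes wf: "wf_program P" and T: "T \<in> threads P"
    and outside: "\<not> in_failed_await P G T t"
    and forward: "pc P G T t < pc P G T (Suc t)"
    and "t < s" "enat s < Nsteps P G T"
  shows "pc P G T t < pc P G T s"
  using assms(5,6)
proof (induction s rule: less_induct)
  case (less s)
  then obtain s' where s: "s = Suc s'" "t \<le> s'"
    by (cases s) auto
  have s'N: "enat s' < Nsteps P G T"
    using executed_le[OF less.prems(2)] s by simp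
  have s'_pc: "pc P G T s' < length (code P T)"
    using pc_less_length_if_executed[OF s'N] .
  show ?case
  proof (cases "s' = t")
    case False
    then have IH: "pc P G T t < pc P G T s'"
      using less.IH[of s'] s s'N by simp
    show ?thesis
    proof (cases "\<exists>n \<kappa>. code P T ! pc P G T s' = Await n \<kappa> \<and> \<kappa> (st P G T s')")
      case True
      then obtain n \<kappa> where aw: "code P T ! pc P G T s' = Await n \<kappa>" "\<kappa> (st P G T s')"
        by blast
      have jump: "pc P G T s = pc P G T s' - n"
        using pc_Suc[OF s'_pc] aw s by simp
      have "await_step P G T s'" "await_fail P G T s'" "await_start P G T s' = s' - n"
        using s'N s'_pc aw by (simp_all add: await_step_def await_fail_def await_start_def await_len_def)
      with outside s False have "t < s' - n"
        unfolding in_failed_await_def by force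
      moreover have "n \<le> s'" "pc P G T (s' - n) = pc P G T s' - n"
        using pc_before_await[OF wf T s'N aw(1) order_refl] by simp_all
      ultimately show ?thesis
        using less.IH[of "s' - n"] s executed_le[OF s'N, of "s' - n"] jump by simp
    next
      case False
      then have "pc P G T s = Suc (pc P G T s')"
        using pc_Suc[OF s'_pc] s by (auto split: stmt.splits)
      with IH show ?thesis by simp
    qed
  qed (use forward s in simp)
qed

lemma write_step_is_Step:
  assumes "is_write (ev P G T t)"
  shows "pc P G T t < length (code P T)" "\<exists>\<epsilon> \<delta>. code P T ! pc P G T t = Step \<epsilon> \<delta>"
  using assms by (auto simp: ev_def split: if_splits stmt.splits)

lemma BE_write_not_in_failed_await:
  "BE P G \<Longrightarrow> T \<in> threads P \<Longrightarrow> is_write (ev P G T t) \<Longrightarrow> \<not> in_failed_await P G T t"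
  unfolding BE_def in_failed_await_def by blast

lemma BE_inj_on_pc_write_steps:
  assumes wf: "wf_program P" and be: "BE P G"
  shows "inj_on (\<lambda>(T, t). (T, pc P G T t)) (write_steps P G)"
proof -
  have less: "pc P G T t < pc P G T t'"
    if "(T, t) \<in> write_steps P G" "(T, t') \<in> write_steps P G" "t < t'" for T t t'
  proof -
    have T: "T \<in> threads P" and w: "is_write (ev P G T t)" and t'N: "enat t' < Nsteps P G T"
      using that by (auto simp: write_steps_def)
    have "pc P G T (Suc t) = Suc (pc P G T t)"
      using write_step_is_Step[OF w] pc_Suc by fastforce
    then show ?thesis
      using pc_increases_after_forward_step[OF wf T BE_write_not_in_failed_await[OF be T w]]
        that(3) t'N by simp
  qed
  show ?thesis
    by (rule inj_onI) (clarsimp, metis less less_irrefl nat_neq_iff)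
qed

lemma BE_card_write_steps_le:
  assumes wf: "wf_program P" and be: "BE P G"
  shows "finite (write_steps P G) \<and> card (write_steps P G) \<le> (\<Sum>T\<in>threads P. length (code P T))"
proof -
  let ?S = "SIGMA T:threads P. {..<length (code P T)}"
  have fin: "finite ?S"
    using wf by (simp add: wf_program_def)
  have sub: "(\<lambda>(T, t). (T, pc P G T t)) ` write_steps P G \<subseteq> ?S"
    using write_step_is_Step(1) by (fastforce simp: write_steps_def)
  note inj = BE_inj_on_pc_write_steps[OF wf be]
  have "card (write_steps P G) \<le> card ?S"
    using card_inj_on_le[OF inj sub fin] .
  also have "card ?S = (\<Sum>T\<in>threads P. length (code P T))"
    using wf by (simp add: wf_program_def card_SigmaI)
  finally show ?thesis
    using inj sub fin by (meson finite_imageD finite_subset)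
qed

theorem lemma9:
  fixes P :: "('thr, 'reg::finite, 'val::finite, 'loc::finite) program"
    and consM :: "('thr, 'loc, 'val) egraph \<Rightarrow> bool"
  assumes "wf_program P"
    and "\<forall>G. consMP P consM G \<longrightarrow> BE P G"
  shows "\<exists>b::nat. \<forall>G. consMP P consM G \<longrightarrow> finite (write_steps P G) \<and> card (write_steps P G) \<le> b"
  using BE_card_write_steps_le[OF assms(1)] assms(2) by blast

end
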